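(* Let $\mathcal{I}\subseteq\mathcal{M}_m$ be decreasing, $f\in\mathcal{M}_m\setminus\mathcal{I}$, $h\mid f$ with $\operatorname{ind}(f/h)=\{i_1<\dots<i_\mu\}$. If $|J^{\mathcal{I}}_f(i_j)|>j-1$ for all $j\in\{1,\dots,\mu\}$, then $$\Bigl|\mathrm{LTA}(m,2)^{f,\mathcal{I}}_f\cdot\tfrac fh\Bigr|=2^{\deg(f/h)}\prod_{j=1}^{\deg(f/h)}\Bigl(2^{|J^{\mathcal{I}}_f(i_j)|}-2^{j-1}\Bigr).$$
   Context: $\mathcal{M}_m$: square-free monomials in $x_0,\dots,x_{m-1}$ over $\mathbb{F}_2$; $\operatorname{ind}(u)$ the variable indices of $u$, $\deg u=|\operatorname{ind} u|$; $x_jf/x_i$ denotes $f$ with $x_i$ replaced by $x_j$. Decreasing: for equal-degree monomials with increasing indices, $u\preceq_{sh}v$ iff componentwise $\le$; $u\preceq v$ iff $u\preceq_{sh}v^*\mid v$ for some $v^*$; $\mathcal{I}$ decreasing if $f\in\mathcal{I}$, $g\preceq f\Rightarrow g\in\mathcal{I}$. $J_f^{\mathcal{I}}(i)=\{j\in[0,i): j\notin\operatorname{ind}(f),\ x_jf/x_i\in\mathcal{I}\}$. $\mathrm{LTA}(m,2)$: pairs $(\mathbf{B},\varepsilon)$, $\mathbf{B}=(b_{i,j})$ binary lower unitriangular $m\times m$, $\varepsilon\in\mathbb{F}_2^m$, acting on a monomial $u$ by $x_i\mapsto x_i+\sum_{j<i}b_{i,j}x_j+\varepsilon_i$, $i\in\operatorname{ind}u$.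 $\mathrm{LTA}(m,2)_f$: subgroup with $\varepsilon_i=0$ for $i\notin\operatorname{ind} f$, $b_{i,j}=0$ if $i\notin\operatorname{ind}f$ or $j\in\operatorname{ind}f$. $\mathrm{LTA}(m,2)^{f,\mathcal{I}}_f\cdot\frac fh$ is the set of polynomials $(\mathbf{B},\varepsilon)\cdot\frac fh$ with $(\mathbf{B},\varepsilon)\in\mathrm{LTA}(m,2)_f$ such that $b_{i,j}=0$ for $i\in\operatorname{ind}(f/h)$, $j<i$, $j\notin J^{\mathcal{I}}_f(i)$, and the submatrix of $\mathbf{B}$ with rows $\operatorname{ind}(f/h)$ and columns $J^{\mathcal{I}}_f(i_\mu)$ has rank $\mu$. *)

theory Defs
  imports Main
begin

text \<open>Square-free monomials in x_0..x_{m-1} are represented by their index sets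
  ind(u), i.e. finite subsets of {0..<m}.  Polynomials over F_2 are represented
  by their evaluation functions (F_2^m -> F_2), with F_2 = bool, + = xor, * = and.\<close>

definition monomials :: "nat \<Rightarrow> nat set set" where
  "monomials m = {u. u \<subseteq> {0..<m}}"

definition sh_le :: "nat set \<Rightarrow> nat set \<Rightarrow> bool" where
  "sh_le u v \<longleftrightarrow> finite u \<and> finite v \<and> card u = card v \<and>
     (\<forall>k < card u. sorted_list_of_set u ! k \<le> sorted_list_of_set v ! k)"

definition mono_le :: "nat set \<Rightarrow> nat set \<Rightarrow> bool" where
  "mono_le u v \<longleftrightarrow> (\<exists>vs. vs \<subseteq> v \<and> sh_le u vs)"

definition decreasing :: "nat \<Rightarrow> nat set set \<Rightarrow> bool" where
  "decreasing m I \<longleftrightarrow> I \<subseteq> monomials m \<and> (\<forall>f\<in>I. \<forall>g. mono_le g f \<longrightarrow> g \<in> I)"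

definition Jset :: "nat set set \<Rightarrow> nat set \<Rightarrow> nat \<Rightarrow> nat set" where
  "Jset I f i = {j. j < i \<and> j \<notin> f \<and> insert j (f - {i}) \<in> I}"

text \<open>Action of (B, eps) on a monomial u: the product over i in ind u of
  x_i + sum_{j<i} b_{i,j} x_j + eps_i, as a function of x \<in> F_2^m.\<close>
definition aff_form :: "(nat \<Rightarrow> nat \<Rightarrow> bool) \<Rightarrow> (nat \<Rightarrow> bool) \<Rightarrow> nat \<Rightarrow> (nat \<Rightarrow> bool) \<Rightarrow> bool" where
  "aff_form B eps i x = ((x i \<noteq> odd (card {j. j < i \<and> B i j \<and> x j})) \<noteq> eps i)"

definition act :: "(nat \<Rightarrow> nat \<Rightarrow> bool) \<Rightarrow> (nat \<Rightarrow> bool) \<Rightarrow> nat set \<Rightarrow> ((nat \<Rightarrow> bool) \<Rightarrow> bool)" where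
  "act B eps u = (\<lambda>x. \<forall>i\<in>u. aff_form B eps i x)"

definition gf2_rows_indep :: "(nat \<Rightarrow> nat \<Rightarrow> bool) \<Rightarrow> nat set \<Rightarrow> nat set \<Rightarrow> bool" where
  "gf2_rows_indep B C S \<longleftrightarrow>
     (\<forall>T. T \<subseteq> S \<longrightarrow> T \<noteq> {} \<longrightarrow> (\<exists>c\<in>C. odd (card {r\<in>T. B r c})))"

definition gf2_rank :: "(nat \<Rightarrow> nat \<Rightarrow> bool) \<Rightarrow> nat set \<Rightarrow> nat set \<Rightarrow> nat" where
  "gf2_rank B R C = Max {card S | S. S \<subseteq> R \<and> gf2_rows_indep B C S}"

text \<open>Elements of LTA(m,2): B is binary lower unitriangular m x m, stored by its
  strictly lower part (b_{i,j} for j < i < m), eps \<in> F_2^m.\<close>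
definition LTA :: "nat \<Rightarrow> ((nat \<Rightarrow> nat \<Rightarrow> bool) \<times> (nat \<Rightarrow> bool)) set" where
  "LTA m = {(B, eps). (\<forall>i j. B i j \<longrightarrow> j < i \<and> i < m) \<and> (\<forall>i. eps i \<longrightarrow> i < m)}"

definition LTA_f :: "nat \<Rightarrow> nat set \<Rightarrow> ((nat \<Rightarrow> nat \<Rightarrow> bool) \<times> (nat \<Rightarrow> bool)) set" where
  "LTA_f m f = {(B, eps) \<in> LTA m. (\<forall>i. i \<notin> f \<longrightarrow> \<not> eps i) \<and>
       (\<forall>i j. (i \<notin> f \<or> j \<in> f) \<longrightarrow> \<not> B i j)}"

definition LTA_orbit :: "nat \<Rightarrow> nat set set \<Rightarrow> nat set \<Rightarrow> nat set \<Rightarrow> ((nat \<Rightarrow> bool) \<Rightarrow> bool) set" where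
  "LTA_orbit m I f h =
     {act B eps (f - h) | B eps. (B, eps) \<in> LTA_f m f \<and>
        (\<forall>i\<in>f - h. \<forall>j<i. j \<notin> Jset I f i \<longrightarrow> \<not> B i j) \<and>
        gf2_rank B (f - h) (if f - h = {} then {} else Jset I f (Max (f - h))) = card (f - h)}"

end

theory Submission
  imports Defs
begin

text \<open>The orbit is parametrised bijectively by the pairs \<open>(B, \<epsilon>)\<close> with \<open>\<epsilon>\<close> supported on
  \<open>ind(f/h)\<close> and \<open>B\<close> having its rows in \<open>ind(f/h)\<close>, row \<open>i\<close> supported in \<open>J(i)\<close>, and
  these rows independent: the product of the affine forms determines them, because the forms
  are triangular in their pivot variables and only involve further variables outside
  \<open>ind(f/h)\<close>. Since \<open>I\<close> is decreasing, \<open>J(i\<^sub>1) \<subseteq> \<dots> \<subseteq> J(i\<^sub>\<mu>)\<close>, so choosing the rows in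
  order, row \<open>i\<^sub>j\<close> is any vector of \<open>F\<^sub>2\<^bsup>J(i\<^sub>j)\<^esup>\<close> outside the \<open>2\<^bsup>j-1\<^esup>\<close>-element span of
  the previous ones, and \<open>\<epsilon>\<close> contributes the factor \<open>2\<^bsup>deg(f/h)\<^esup>\<close>.\<close>

text \<open>Vectors over \<open>F\<^sub>2\<close> are sets of column indices; this is the sum of the rows \<open>T\<close> of \<open>B\<close>.\<close>
definition gf2_row_sum :: "(nat \<Rightarrow> nat \<Rightarrow> bool) \<Rightarrow> nat set \<Rightarrow> nat set" where
  "gf2_row_sum B T = {c. odd (card {r\<in>T. B r c})}"

lemma odd_card_sym_diff:
  assumes "finite A" "finite B"
  shows "odd (card (sym_diff A B)) \<longleftrightarrow> odd (card A) \<noteq> odd (card B)"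
proof -
  have "card (sym_diff A B) = card (A - B) + card (B - A)"
    using assms by (intro card_Un_disjoint) auto
  moreover have "card A = card (A - B) + card (A \<inter> B)" "card B = card (B - A) + card (A \<inter> B)"
    using assms by (metis Int_commute add.commute card_Int_Diff)+
  ultimately show ?thesis by presburger
qed

lemma gf2_rows_indep_iff_row_sum:
  "gf2_rows_indep B C S \<longleftrightarrow> (\<forall>T\<subseteq>S. T \<noteq> {} \<longrightarrow> gf2_row_sum B T \<inter> C \<noteq> {})"
  unfolding gf2_rows_indep_def gf2_row_sum_def by auto

lemma gf2_row_sum_cong:
  assumes "\<And>r. r \<in> T \<Longrightarrow> B' r = B r"
  shows "gf2_row_sum B' T = gf2_row_sum B T"
proof -
  have "{r\<in>T. B' r c} = {r\<in>T. B r c}" for c using assms by auto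
  then show ?thesis unfolding gf2_row_sum_def by simp
qed

lemma gf2_row_sum_sym_diff:
  assumes "finite T1" "finite T2"
  shows "gf2_row_sum B (sym_diff T1 T2) = {c. c \<in> gf2_row_sum B T1 \<longleftrightarrow> c \<notin> gf2_row_sum B T2}"
proof -
  have "odd (card {r\<in>sym_diff T1 T2. B r c}) \<longleftrightarrow>
      odd (card {r\<in>T1. B r c}) \<noteq> odd (card {r\<in>T2. B r c})" for c
  proof -
    have "{r\<in>sym_diff T1 T2. B r c} = sym_diff {r\<in>T1. B r c} {r\<in>T2. B r c}" by auto
    then show ?thesis using odd_card_sym_diff[of "{r\<in>T1. B r c}" "{r\<in>T2. B r c}"] assms
      by simp
  qed
  then show ?thesis unfolding gf2_row_sum_def by blast
qed

lemma gf2_row_sum_update_insert: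
  assumes "finite T" "i \<notin> T"
  shows "gf2_row_sum (B(i := \<lambda>j. j \<in> w)) (insert i T) = {c. c \<in> w \<longleftrightarrow> c \<notin> gf2_row_sum B T}"
proof -
  have "{r\<in>insert i T. (B(i := \<lambda>j. j \<in> w)) r c} =
      (if c \<in> w then insert i {r\<in>T. B r c} else {r\<in>T. B r c})" for c
    using assms(2) by auto
  then show ?thesis
    using assms unfolding gf2_row_sum_def by auto
qed

lemma gf2_row_sum_subset:
  assumes "T \<subseteq> S" "\<And>r c. r \<in> S \<Longrightarrow> B r c \<Longrightarrow> c \<in> D"
  shows "gf2_row_sum B T \<subseteq> D"
proof
  fix c assume "c \<in> gf2_row_sum B T"
  then have "{r\<in>T. B r c} \<noteq> {}" unfolding gf2_row_sum_def by (intro notI) simp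
  then show "c \<in> D" using assms by auto
qed

lemma inj_on_gf2_row_sum:
  assumes "finite S" "gf2_rows_indep B C S"
  shows "inj_on (gf2_row_sum B) (Pow S)"
proof
  fix T1 T2 assume T: "T1 \<in> Pow S" "T2 \<in> Pow S" "gf2_row_sum B T1 = gf2_row_sum B T2"
  then have fin: "finite T1" "finite T2" using assms(1) finite_subset by auto
  show "T1 = T2"
  proof (rule ccontr)
    assume "T1 \<noteq> T2"
    then have "sym_diff T1 T2 \<noteq> {}" "sym_diff T1 T2 \<subseteq> S" using T by auto
    then have "gf2_row_sum B (sym_diff T1 T2) \<inter> C \<noteq> {}"
      using assms(2) unfolding gf2_rows_indep_iff_row_sum by blast
    then show False using gf2_row_sum_sym_diff[OF fin, of B] T(3) by auto
  qed
qed

lemma gf2_rows_indep_subset_cong: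
  assumes "gf2_rows_indep B C S" "S' \<subseteq> S" "\<And>r. r \<in> S' \<Longrightarrow> B' r = B r"
  shows "gf2_rows_indep B' C S'"
  unfolding gf2_rows_indep_iff_row_sum
proof (intro allI impI)
  fix T assume "T \<subseteq> S'" "T \<noteq> {}"
  moreover from this have "gf2_row_sum B' T = gf2_row_sum B T"
    using assms(3) by (intro gf2_row_sum_cong) auto
  ultimately show "gf2_row_sum B' T \<inter> C \<noteq> {}"
    using assms(1,2) unfolding gf2_rows_indep_iff_row_sum by auto
qed

lemma gf2_rows_indep_insert_iff:
  assumes fin: "finite S" and "i \<notin> S" and indep: "gf2_rows_indep B C S"
    and supp: "\<And>r c. r \<in> S \<Longrightarrow> B r c \<Longrightarrow> c \<in> D" and "D \<subseteq> C" and "w \<subseteq> D"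
  shows "gf2_rows_indep (B(i := \<lambda>j. j \<in> w)) C (insert i S) \<longleftrightarrow> w \<notin> gf2_row_sum B ` Pow S"
    (is "gf2_rows_indep ?B' C _ \<longleftrightarrow> _")
proof
  assume indep': "gf2_rows_indep ?B' C (insert i S)"
  show "w \<notin> gf2_row_sum B ` Pow S"
  proof
    assume "w \<in> gf2_row_sum B ` Pow S"
    then obtain T where T: "T \<subseteq> S" "w = gf2_row_sum B T" by auto
    then have "finite T" "i \<notin> T" using fin \<open>i \<notin> S\<close> finite_subset by auto
    then have "gf2_row_sum ?B' (insert i T) = {c. c \<in> w \<longleftrightarrow> c \<notin> gf2_row_sum B T}"
      by (rule gf2_row_sum_update_insert)
    also have "\<dots> = {}" using T(2) by simp
    finally have "gf2_row_sum ?B' (insert i T) \<inter> C = {}" by simp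
    moreover have "insert i T \<subseteq> insert i S" using T(1) by blast
    ultimately show False using indep' unfolding gf2_rows_indep_iff_row_sum by blast
  qed
next
  assume w: "w \<notin> gf2_row_sum B ` Pow S"
  show "gf2_rows_indep ?B' C (insert i S)"
    unfolding gf2_rows_indep_iff_row_sum
  proof (intro allI impI)
    fix T assume T: "T \<subseteq> insert i S" "T \<noteq> {}"
    show "gf2_row_sum ?B' T \<inter> C \<noteq> {}"
    proof (cases "i \<in> T")
      case False
      then have "gf2_row_sum ?B' T = gf2_row_sum B T" by (intro gf2_row_sum_cong) auto
      then show ?thesis using indep T False unfolding gf2_rows_indep_iff_row_sum by auto
    next
      case True
      define T' where "T' = T - {i}"
      have T': "T' \<subseteq> S" "finite T'" "i \<notin> T'" "T = insert i T'"
        using T True fin finite_subset by (auto simp: T'_def)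
      have span: "gf2_row_sum B T' \<subseteq> D" using T'(1) supp by (rule gf2_row_sum_subset)
      have sum: "gf2_row_sum ?B' T = {c. c \<in> w \<longleftrightarrow> c \<notin> gf2_row_sum B T'}"
        using gf2_row_sum_update_insert[OF T'(2,3)] T'(4) by simp
      show ?thesis
      proof
        assume "gf2_row_sum ?B' T \<inter> C = {}"
        then have "w = gf2_row_sum B T'"
          using sum span \<open>D \<subseteq> C\<close> \<open>w \<subseteq> D\<close> by auto
        then show False using w T'(1) by blast
      qed
    qed
  qed
qed

lemma card_gf2_rows_indep_extensions:
  assumes "finite S" "finite D" "i \<notin> S" "gf2_rows_indep B C S"
    and "\<And>r c. r \<in> S \<Longrightarrow> B r c \<Longrightarrow> c \<in> D" and "D \<subseteq> C"
  shows "card {w. w \<subseteq> D \<and> gf2_rows_indep (B(i := \<lambda>j. j \<in> w)) C (insert i S)} =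
    2 ^ card D - 2 ^ card S"
proof -
  have span: "gf2_row_sum B ` Pow S \<subseteq> Pow D"
    using gf2_row_sum_subset assms(5) by blast
  have "{w. w \<subseteq> D \<and> gf2_rows_indep (B(i := \<lambda>j. j \<in> w)) C (insert i S)} =
      Pow D - gf2_row_sum B ` Pow S"
    using gf2_rows_indep_insert_iff[OF assms(1,3,4,5,6)] by auto
  moreover have "card (gf2_row_sum B ` Pow S) = 2 ^ card S"
    using card_image[OF inj_on_gf2_row_sum[OF assms(1,4)]] assms(1) by (simp add: card_Pow)
  ultimately show ?thesis
    using card_Diff_subset[OF _ span] assms(1,2) by (simp add: card_Pow)
qed

lemma gf2_rank_eq_card_iff:
  assumes "finite R"
  shows "gf2_rank B R C = card R \<longleftrightarrow> gf2_rows_indep B C R"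
proof -
  let ?A = "{card S | S. S \<subseteq> R \<and> gf2_rows_indep B C S}"
  have "?A \<subseteq> card ` Pow R" by auto
  then have fin: "finite ?A" using assms finite_subset by blast
  have "gf2_rows_indep B C {}" unfolding gf2_rows_indep_def by auto
  then have ne: "?A \<noteq> {}" by blast
  have bound: "\<forall>a\<in>?A. a \<le> card R" using assms card_mono by blast
  show ?thesis
  proof
    assume "gf2_rank B R C = card R"
    then obtain S where "S \<subseteq> R" "gf2_rows_indep B C S" "card S = card R"
      using Max_in[OF fin ne] unfolding gf2_rank_def by auto
    then show "gf2_rows_indep B C R" using card_subset_eq assms by blast
  next
    assume "gf2_rows_indep B C R"
    then show "gf2_rank B R C = card R"
      unfolding gf2_rank_def using bound by (intro Max_eqI[OF fin]) auto
  qed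
qed

definition indep_matrices :: "(nat \<Rightarrow> nat set) \<Rightarrow> nat set \<Rightarrow> nat set \<Rightarrow> (nat \<Rightarrow> nat \<Rightarrow> bool) set" where
  "indep_matrices J C S = {B. (\<forall>i j. B i j \<longrightarrow> i \<in> S \<and> j \<in> J i) \<and> gf2_rows_indep B C S}"

lemma finite_indep_matrices:
  assumes "finite S" "\<And>i. i \<in> S \<Longrightarrow> finite (J i)"
  shows "finite (indep_matrices J C S)"
proof (rule finite_imageD)
  let ?graph = "\<lambda>B :: nat \<Rightarrow> nat \<Rightarrow> bool. {(i, j). B i j}"
  have "?graph ` indep_matrices J C S \<subseteq> Pow (Sigma S J)"
    by (auto simp: indep_matrices_def)
  then show "finite (?graph ` indep_matrices J C S)"
    using assms by (meson finite_Pow_iff finite_SigmaI finite_subset)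
  show "inj_on ?graph (indep_matrices J C S)"
    by (rule inj_onI) (simp add: fun_eq_iff set_eq_iff)
qed

lemma indep_matrices_insert_eq_image:
  assumes "i \<notin> S"
  shows "indep_matrices J C (insert i S) = (\<lambda>(B, w). B(i := \<lambda>j. j \<in> w)) `
    (SIGMA B:indep_matrices J C S. {w. w \<subseteq> J i \<and> gf2_rows_indep (B(i := \<lambda>j. j \<in> w)) C (insert i S)})"
    (is "_ = ?upd ` ?Params")
proof (intro set_eqI iffI)
  fix B assume B: "B \<in> indep_matrices J C (insert i S)"
  define B0 where "B0 = B(i := \<lambda>j. False)"
  have B_eq: "B0(i := B i) = B" by (simp add: B0_def)
  have indep: "gf2_rows_indep B C (insert i S)" and supp: "\<forall>r j. B r j \<longrightarrow> r \<in> insert i S \<and> j \<in> J r"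
    using B by (simp_all add: indep_matrices_def)
  have "gf2_rows_indep B0 C S"
    using indep by (rule gf2_rows_indep_subset_cong) (use assms in \<open>auto simp: B0_def\<close>)
  moreover have "\<forall>r j. B0 r j \<longrightarrow> r \<in> S \<and> j \<in> J r" "{j. B i j} \<subseteq> J i"
    using supp by (auto simp: B0_def)
  ultimately have "(B0, {j. B i j}) \<in> ?Params"
    using indep by (simp add: indep_matrices_def B_eq)
  then show "B \<in> ?upd ` ?Params" by (rule image_eqI[rotated]) (simp add: B_eq)
next
  fix B assume "B \<in> ?upd ` ?Params"
  then show "B \<in> indep_matrices J C (insert i S)"
    by (auto simp: indep_matrices_def split: if_splits)
qed

lemma card_indep_matrices_insert:
  assumes "finite S" "i \<notin> S" "finite (J i)" "J i \<subseteq> C" "\<And>r. r \<in> S \<Longrightarrow> J r \<subseteq> J i"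
    and "finite (indep_matrices J C S)"
  shows "card (indep_matrices J C (insert i S)) =
    card (indep_matrices J C S) * (2 ^ card (J i) - 2 ^ card S)"
proof -
  let ?upd = "\<lambda>(B, w). B(i := \<lambda>j. j \<in> w)"
  let ?W = "\<lambda>B. {w. w \<subseteq> J i \<and> gf2_rows_indep (B(i := \<lambda>j. j \<in> w)) C (insert i S)}"
  have card_W: "card (?W B) = 2 ^ card (J i) - 2 ^ card S" if "B \<in> indep_matrices J C S" for B
  proof (rule card_gf2_rows_indep_extensions)
    show "gf2_rows_indep B C S" using that by (simp add: indep_matrices_def)
    show "c \<in> J i" if "r \<in> S" "B r c" for r c
      using \<open>B \<in> indep_matrices J C S\<close> that assms(5) by (auto simp: indep_matrices_def)
  qed (use assms in auto)
  have "inj_on ?upd (Sigma (indep_matrices J C S) ?W)"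
  proof (rule inj_onI, clarify)
    fix B w B' w'
    assume "B \<in> indep_matrices J C S" "B' \<in> indep_matrices J C S"
      and eq: "B(i := \<lambda>j. j \<in> w) = B'(i := \<lambda>j. j \<in> w')"
    then have "B i = B' i" using assms(2) by (auto simp: indep_matrices_def fun_eq_iff)
    then show "B = B' \<and> w = w'"
      using eq by (metis fun_upd_idem fun_upd_upd fun_upd_same Collect_mem_eq)
  qed
  then have "card (indep_matrices J C (insert i S)) = card (Sigma (indep_matrices J C S) ?W)"
    unfolding indep_matrices_insert_eq_image[OF assms(2)] by (rule card_image)
  also have "\<dots> = (\<Sum>B\<in>indep_matrices J C S. card (?W B))"
    using assms(3,6) by (intro card_SigmaI) auto
  also have "\<dots> = card (indep_matrices J C S) * (2 ^ card (J i) - 2 ^ card S)"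
    using card_W by simp
  finally show ?thesis .
qed

lemma card_indep_matrices:
  assumes "distinct rs" "sorted_wrt (\<lambda>a b. J a \<subseteq> J b) rs"
    and "\<And>i. i \<in> set rs \<Longrightarrow> finite (J i)" "\<And>i. i \<in> set rs \<Longrightarrow> J i \<subseteq> C"
  shows "card (indep_matrices J C (set rs)) = (\<Prod>k<length rs. 2 ^ card (J (rs ! k)) - 2 ^ k)"
  using assms
proof (induction rs rule: rev_induct)
  case Nil
  have "indep_matrices J C {} = {\<lambda>i j. False}"
    by (auto simp: indep_matrices_def gf2_rows_indep_def fun_eq_iff)
  then show ?case by simp
next
  case (snoc i rs)
  have "card (indep_matrices J C (insert i (set rs))) =
      card (indep_matrices J C (set rs)) * (2 ^ card (J i) - 2 ^ card (set rs))"
    using snoc.prems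
    by (intro card_indep_matrices_insert finite_indep_matrices) (auto simp: sorted_wrt_append)
  moreover have "card (indep_matrices J C (set rs)) = (\<Prod>k<length rs. 2 ^ card (J (rs ! k)) - 2 ^ k)"
    using snoc by (auto simp: sorted_wrt_append)
  ultimately show ?case
    using snoc.prems(1) by (simp add: distinct_card nth_append lessThan_Suc)
qed

lemma card_le_le_if_less_nth_sorted_list_of_set:
  assumes "finite U" "k < card U" "t < sorted_list_of_set U ! k"
  shows "card {x\<in>U. x \<le> t} \<le> k"
proof -
  let ?L = "sorted_list_of_set U"
  have "{x\<in>U. x \<le> t} \<subseteq> set (take k ?L)"
  proof
    fix x assume x: "x \<in> {x\<in>U. x \<le> t}"
    then obtain p where p: "p < length ?L" "?L ! p = x"
      using assms(1) by (metis mem_Collect_eq in_set_conv_nth set_sorted_list_of_set)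
    have "p < k"
    proof (rule ccontr)
      assume "\<not> p < k"
      then have "?L ! k \<le> ?L ! p" using p(1) by (intro sorted_nth_mono) auto
      then show False using x p(2) assms(3) by auto
    qed
    then show "x \<in> set (take k ?L)" using p by (metis in_set_conv_nth length_take min_less_iff_conj nth_take)
  qed
  then have "card {x\<in>U. x \<le> t} \<le> card (set (take k ?L))" by (intro card_mono) auto
  also have "\<dots> \<le> k" using card_length[of "take k ?L"] by simp
  finally show ?thesis .
qed

lemma Suc_le_card_le_nth_sorted_list_of_set:
  assumes "finite V" "k < card V"
  shows "Suc k \<le> card {x\<in>V. x \<le> sorted_list_of_set V ! k}"
proof -
  let ?L = "sorted_list_of_set V"
  have "set (take (Suc k) ?L) \<subseteq> {x\<in>V. x \<le> ?L ! k}"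
  proof
    fix x assume "x \<in> set (take (Suc k) ?L)"
    then obtain p where p: "p \<le> k" "x = ?L ! p"
      using assms(2) by (auto simp: in_set_conv_nth less_Suc_eq_le)
    moreover have "?L ! p \<in> set ?L" using p(1) assms(2) by (intro nth_mem) simp
    ultimately show "x \<in> {x\<in>V. x \<le> ?L ! k}"
      using assms by (auto intro: sorted_nth_mono)
  qed
  moreover have "card (set (take (Suc k) ?L)) = Suc k"
    using assms(2) by (simp add: distinct_card)
  ultimately show ?thesis
    using assms(1) card_mono[of "{x\<in>V. x \<le> ?L ! k}" "set (take (Suc k) ?L)"] by simp
qed

lemma sh_le_if_card_le_le:
  assumes "finite U" "finite V" "card U = card V"
    and "\<And>t. card {x\<in>V. x \<le> t} \<le> card {x\<in>U. x \<le> t}"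
  shows "sh_le U V"
  unfolding sh_le_def
proof (intro conjI allI impI)
  fix k assume k: "k < card U"
  show "sorted_list_of_set U ! k \<le> sorted_list_of_set V ! k"
  proof (rule ccontr)
    let ?t = "sorted_list_of_set V ! k"
    assume "\<not> sorted_list_of_set U ! k \<le> ?t"
    then have "card {x\<in>U. x \<le> ?t} \<le> k"
      using card_le_le_if_less_nth_sorted_list_of_set[OF assms(1) k] by simp
    moreover have "Suc k \<le> card {x\<in>V. x \<le> ?t}"
      using Suc_le_card_le_nth_sorted_list_of_set assms(2,3) k by simp
    ultimately show False using assms(4)[of ?t] by simp
  qed
qed (use assms in auto)

lemma card_insert_Diff_singleton:
  assumes "finite A" "a \<in> A" "b \<notin> A"
  shows "card (insert b (A - {a})) = card A"
  using assms by (metis card_Suc_Diff1 card_insert_disjoint finite_Diff DiffE)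

lemma sh_le_replace_by_smaller:
  assumes "finite A" "a \<in> A" "b \<notin> A" "b \<le> a"
  shows "sh_le (insert b (A - {a})) A"
proof (rule sh_le_if_card_le_le)
  show "card (insert b (A - {a})) = card A"
    using assms by (intro card_insert_Diff_singleton)
  show "card {x\<in>A. x \<le> t} \<le> card {x\<in>insert b (A - {a}). x \<le> t}" for t
  proof (cases "a \<le> t")
    case True
    then have "{x\<in>insert b (A - {a}). x \<le> t} = insert b ({x\<in>A. x \<le> t} - {a})"
      using assms by auto
    moreover have "card (insert b ({x\<in>A. x \<le> t} - {a})) = card {x\<in>A. x \<le> t}"
      using True assms by (intro card_insert_Diff_singleton) auto
    ultimately show ?thesis by simp
  next
    case False
    then have "{x\<in>A. x \<le> t} \<subseteq> {x\<in>insert b (A - {a}). x \<le> t}" by auto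
    then show ?thesis using assms(1) by (intro card_mono) auto
  qed
qed (use assms in auto)

text \<open>If \<open>x\<^sub>j f / x\<^sub>i \<in> I\<close> and \<open>i < i'\<close>, then \<open>x\<^sub>j f / x\<^sub>i\<^sub>'\<close> arises from it by
  replacing \<open>x\<^sub>i\<^sub>'\<close> with the smaller variable \<open>x\<^sub>i\<close>.\<close>
lemma Jset_mono:
  assumes "decreasing m I" "finite f" "i \<in> f" "i' \<in> f" "i \<le> i'"
  shows "Jset I f i \<subseteq> Jset I f i'"
proof
  fix j assume "j \<in> Jset I f i"
  then have j: "j < i" "j \<notin> f" and g: "insert j (f - {i}) \<in> I" unfolding Jset_def by auto
  show "j \<in> Jset I f i'"
  proof (cases "i = i'")
    case False
    let ?g = "insert j (f - {i})"
    have "insert j (f - {i'}) = insert i (?g - {i'})" using False j assms(3,4) by auto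
    moreover have "sh_le (insert i (?g - {i'})) ?g"
      by (rule sh_le_replace_by_smaller) (use False j assms in auto)
    ultimately have "mono_le (insert j (f - {i'})) ?g" unfolding mono_le_def by auto
    then have "insert j (f - {i'}) \<in> I" using assms(1) g unfolding decreasing_def by blast
    then show ?thesis using j assms(5) unfolding Jset_def by auto
  qed (use \<open>j \<in> Jset I f i\<close> in simp)
qed

definition aff_pivot :: "(nat \<Rightarrow> nat \<Rightarrow> bool) \<Rightarrow> (nat \<Rightarrow> bool) \<Rightarrow> nat \<Rightarrow> (nat \<Rightarrow> bool) \<Rightarrow> bool" where
  "aff_pivot B e k x = (odd (card {j. j < k \<and> B k j \<and> x j}) = e k)"

lemma aff_form_iff_aff_pivot: "aff_form B e k x \<longleftrightarrow> x k = aff_pivot B e k x"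
  unfolding aff_form_def aff_pivot_def by auto

lemma aff_pivot_cong:
  assumes "\<And>j. B k j \<Longrightarrow> j \<notin> R" "\<And>j. j \<notin> R \<Longrightarrow> x j = y j"
  shows "aff_pivot B e k x = aff_pivot B e k y"
proof -
  have "{j. j < k \<and> B k j \<and> x j} = {j. j < k \<and> B k j \<and> y j}" using assms by auto
  then show ?thesis unfolding aff_pivot_def by simp
qed

text \<open>Fixing the coordinates outside \<open>R\<close> arbitrarily and solving for those in \<open>R\<close> gives a
  point where \<open>act B e R\<close> is \<open>1\<close>; evaluating \<open>act B' e' R\<close> there compares the pivots.\<close>
lemma aff_pivot_eq_if_act_eq:
  assumes B: "\<And>i j. B i j \<Longrightarrow> j \<notin> R" and B': "\<And>i j. B' i j \<Longrightarrow> j \<notin> R"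
    and eq: "act B e R = act B' e' R" and "k \<in> R"
  shows "aff_pivot B e k x0 = aff_pivot B' e' k x0"
proof -
  define x where "x = (\<lambda>t. if t \<in> R then aff_pivot B e t x0 else x0 t)"
  have outside: "\<And>t. t \<notin> R \<Longrightarrow> x0 t = x t" by (simp add: x_def)
  have "act B e R x" unfolding act_def aff_form_iff_aff_pivot
  proof
    fix t assume "t \<in> R"
    then show "x t = aff_pivot B e t x"
      using aff_pivot_cong[OF B outside] by (simp add: x_def)
  qed
  then have "act B' e' R x" using eq by simp
  then have "x k = aff_pivot B' e' k x"
    using \<open>k \<in> R\<close> unfolding act_def aff_form_iff_aff_pivot by blast
  then show ?thesis
    using aff_pivot_cong[OF B' outside] \<open>k \<in> R\<close> by (simp add: x_def)
qed

lemma act_inj: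
  assumes B: "\<And>i j. B i j \<Longrightarrow> i \<in> R \<and> j \<notin> R \<and> j < i"
    and B': "\<And>i j. B' i j \<Longrightarrow> i \<in> R \<and> j \<notin> R \<and> j < i"
    and "\<And>i. e i \<Longrightarrow> i \<in> R" "\<And>i. e' i \<Longrightarrow> i \<in> R"
    and eq: "act B e R = act B' e' R"
  shows "B = B' \<and> e = e'"
proof -
  have pivot: "aff_pivot B e k x = aff_pivot B' e' k x" if "k \<in> R" for k x
    using B B' by (intro aff_pivot_eq_if_act_eq[OF _ _ eq that]) blast+
  have "e k = e' k" for k
    using pivot[of k "\<lambda>_. False"] assms(3,4) by (cases "k \<in> R") (auto simp: aff_pivot_def)
  moreover have "B k j = B' k j" for k j
  proof (cases "k \<in> R \<and> j < k")
    case True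
    have "{i. i < k \<and> C k i \<and> i = j} = (if C k j then {j} else {})" for C :: "nat \<Rightarrow> nat \<Rightarrow> bool"
      using True by auto
    then show ?thesis
      using pivot[of k "\<lambda>i. i = j"] True calculation by (simp add: aff_pivot_def split: if_splits)
  qed (use B B' in blast)
  ultimately show ?thesis by (simp add: fun_eq_iff)
qed

lemma card_fun_support_subset:
  assumes "finite R"
  shows "card {e :: 'a \<Rightarrow> bool. \<forall>i. e i \<longrightarrow> i \<in> R} = 2 ^ card R"
proof -
  have "{e :: 'a \<Rightarrow> bool. \<forall>i. e i \<longrightarrow> i \<in> R} = (\<lambda>A i. i \<in> A) ` Pow R"
    by (auto intro!: image_eqI[where x = "Collect _"])
  moreover have "inj_on (\<lambda>A i. i \<in> A) (Pow R)"
    by (rule inj_onI) (simp add: fun_eq_iff set_eq_iff)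
  ultimately show ?thesis using assms by (simp add: card_image card_Pow)
qed

definition rank_columns :: "nat set set \<Rightarrow> nat set \<Rightarrow> nat set \<Rightarrow> nat set" where
  "rank_columns I f R = (if R = {} then {} else Jset I f (Max R))"

lemma Jset_subset_rank_columns:
  assumes "decreasing m I" "finite f" "R \<subseteq> f" "i \<in> R"
  shows "Jset I f i \<subseteq> rank_columns I f R"
proof -
  have "finite R" "R \<noteq> {}" using assms finite_subset by auto
  then have "Max R \<in> R" "i \<le> Max R" using assms(4) by auto
  then show ?thesis
    using Jset_mono[OF assms(1,2)] assms(3,4) \<open>R \<noteq> {}\<close> by (auto simp: rank_columns_def)
qed

lemma LTA_orbit_eq_image:
  assumes "f \<in> monomials m"
  shows "LTA_orbit m I f h = (\<lambda>(B, e). act B e (f - h)) `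
    (indep_matrices (Jset I f) (rank_columns I f (f - h)) (f - h) \<times> {e. \<forall>i. e i \<longrightarrow> i \<in> f - h})"
    (is "_ = ?act ` (?Mats \<times> ?Eps)")
proof (intro set_eqI iffI)
  fix p assume "p \<in> LTA_orbit m I f h"
  then obtain B e where p: "p = act B e (f - h)" and LTA: "(B, e) \<in> LTA_f m f"
    and J: "\<forall>i\<in>f - h. \<forall>j<i. j \<notin> Jset I f i \<longrightarrow> \<not> B i j"
    and rank: "gf2_rank B (f - h) (rank_columns I f (f - h)) = card (f - h)"
    unfolding LTA_orbit_def rank_columns_def by blast
  define B' where "B' = (\<lambda>i j. i \<in> f - h \<and> B i j)"
  define e' where "e' = (\<lambda>i. i \<in> f - h \<and> e i)"
  have "finite (f - h)" using assms finite_subset by (auto simp: monomials_def)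
  then have "gf2_rows_indep B (rank_columns I f (f - h)) (f - h)"
    using rank gf2_rank_eq_card_iff by blast
  then have "gf2_rows_indep B' (rank_columns I f (f - h)) (f - h)"
    by (rule gf2_rows_indep_subset_cong) (auto simp: B'_def)
  moreover have "B' i j \<Longrightarrow> i \<in> f - h \<and> j \<in> Jset I f i" for i j
    using LTA J by (auto simp: B'_def LTA_f_def LTA_def)
  ultimately have "(B', e') \<in> ?Mats \<times> ?Eps" by (auto simp: indep_matrices_def e'_def)
  moreover have "act B e (f - h) = act B' e' (f - h)"
    unfolding act_def aff_form_def B'_def e'_def by (intro ext ball_cong) auto
  ultimately show "p \<in> ?act ` (?Mats \<times> ?Eps)" unfolding p by force
next
  fix p assume "p \<in> ?act ` (?Mats \<times> ?Eps)"
  then obtain B e where p: "p = act B e (f - h)" and "B \<in> ?Mats" "e \<in> ?Eps" by auto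
  then have supp: "\<forall>i j. B i j \<longrightarrow> i \<in> f - h \<and> j \<in> Jset I f i"
    and indep: "gf2_rows_indep B (rank_columns I f (f - h)) (f - h)"
    and eps: "\<forall>i. e i \<longrightarrow> i \<in> f - h"
    by (auto simp: indep_matrices_def)
  have "(B, e) \<in> LTA_f m f"
    using assms supp eps unfolding LTA_f_def LTA_def Jset_def monomials_def by fastforce
  moreover have "finite (f - h)" using assms finite_subset by (auto simp: monomials_def)
  then have "gf2_rank B (f - h) (rank_columns I f (f - h)) = card (f - h)"
    using indep gf2_rank_eq_card_iff by blast
  ultimately show "p \<in> LTA_orbit m I f h"
    using supp unfolding LTA_orbit_def rank_columns_def p by blast
qed

lemma inj_on_act_indep_matrices:
  assumes "R \<subseteq> f"
  shows "inj_on (\<lambda>(B, e). act B e R)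
    (indep_matrices (Jset I f) C R \<times> {e. \<forall>i. e i \<longrightarrow> i \<in> R})"
proof (rule inj_onI, clarify)
  fix B e B' e'
  assume "B \<in> indep_matrices (Jset I f) C R" "B' \<in> indep_matrices (Jset I f) C R"
    and "\<forall>i. e i \<longrightarrow> i \<in> R" "\<forall>i. e' i \<longrightarrow> i \<in> R" "act B e R = act B' e' R"
  moreover have "\<And>i j. j \<in> Jset I f i \<Longrightarrow> j \<notin> R \<and> j < i"
    using assms by (auto simp: Jset_def)
  ultimately show "B = B' \<and> e = e'"
    by (intro act_inj[of B R B' e e']) (fastforce simp: indep_matrices_def)+
qed

lemma card_indep_matrices_Jset:
  assumes "decreasing m I" "finite f" "R \<subseteq> f"
  shows "card (indep_matrices (Jset I f) (rank_columns I f R) R) =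
    (\<Prod>k<card R. 2 ^ card (Jset I f (sorted_list_of_set R ! k)) - 2 ^ k)"
proof -
  let ?rs = "sorted_list_of_set R"
  have R: "finite R" using assms(2,3) finite_subset by blast
  have "sorted_wrt (\<lambda>a b. Jset I f a \<subseteq> Jset I f b) ?rs"
  proof (rule sorted_wrt_mono_rel[of _ "(\<le>)"])
    show "Jset I f a \<subseteq> Jset I f b" if "a \<in> set ?rs" "b \<in> set ?rs" "a \<le> b" for a b
      using that R assms(3) by (intro Jset_mono[OF assms(1,2)]) auto
  qed simp
  moreover have "finite (Jset I f i)" for i
    by (rule finite_subset[of _ "{..<i}"]) (auto simp: Jset_def)
  ultimately have "card (indep_matrices (Jset I f) (rank_columns I f R) (set ?rs)) =
      (\<Prod>k<length ?rs. 2 ^ card (Jset I f (?rs ! k)) - 2 ^ k)"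
    using R Jset_subset_rank_columns[OF assms] by (intro card_indep_matrices) auto
  then show ?thesis using R by simp
qed

theorem proposition6:
  fixes m :: nat and I :: "nat set set" and f h :: "nat set"
  assumes "decreasing m I"
    and "f \<in> monomials m" and "f \<notin> I"
    and "h \<subseteq> f"
    and "\<forall>j\<in>{1..card (f - h)}. card (Jset I f (sorted_list_of_set (f - h) ! (j - 1))) > j - 1"
  shows "card (LTA_orbit m I f h) =
    2 ^ card (f - h) *
    (\<Prod>j = 1..card (f - h). (2 ^ card (Jset I f (sorted_list_of_set (f - h) ! (j - 1))) - 2 ^ (j - 1)))"
proof -
  let ?R = "f - h"
  let ?Mats = "indep_matrices (Jset I f) (rank_columns I f ?R) ?R"
  let ?Eps = "{e. \<forall>i. e i \<longrightarrow> i \<in> ?R}"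
  have f: "finite f" using assms(2) finite_subset by (auto simp: monomials_def)
  have "card (LTA_orbit m I f h) = card (?Mats \<times> ?Eps)"
    unfolding LTA_orbit_eq_image[OF assms(2)]
    by (intro card_image inj_on_act_indep_matrices) blast
  also have "\<dots> = (\<Prod>k<card ?R. 2 ^ card (Jset I f (sorted_list_of_set ?R ! k)) - 2 ^ k) * 2 ^ card ?R"
    using f card_indep_matrices_Jset[OF assms(1) f] card_fun_support_subset[of ?R]
    by (simp add: card_cartesian_product)
  finally show ?thesis by (simp add: prod.atLeast1_atMost_eq mult.commute)
qed

end
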